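(* Let $E$ and $E'$ be strongly independent equations in the unknowns $x_1,\dots,x_n$. Then there exist $k,l\in\{1,\dots,n\}$ with $t_{kl}^{E,E'}\ne0$.
   Context: An equation is a pair $(u,v)$ of words over $\{x_1,\dots,x_n\}$; a solution is a morphism $h:\{x_1,\dots,x_n\}^*\to\{a_1,\dots,a_r\}^*$ with $h(u)=h(v)$; its rank is the dimension of the $\mathbb Q$-span of the vectors $(|h(x_1)|_{a_i},\dots,|h(x_n)|_{a_i})$. $E,E'$ are strongly independent if $E$ has a solution of rank $n-1$ not solving $E'$ and $E'$ has a solution of rank $n-1$ not solving $E$. For $E=(x_{i_1}\cdots x_{i_r},\,x_{j_1}\cdots x_{j_s})$, $S_{E,x_j}=\sum_{a:\,i_a=j}\prod_{t=1}^{a-1}X_{i_t}-\sum_{a:\,j_a=j}\prod_{t=1}^{a-1}X_{j_t}\in\mathbb Z[X_1,\dots,X_n]$ (empty product $=1$), and $t_{kl}^{E,E'}=S_{E,x_k}S_{E',x_l}-S_{E',x_k}S_{E,x_l}$. *)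

theory Defs
  imports "HOL-Library.Poly_Mapping" "Jordan_Normal_Form.DL_Rank"
begin

(* Unknowns x_1..x_n are represented by the naturals 1..n; a word over the unknowns
   is a nat list.  An equation is a pair (u,v) of such words. *)
type_synonym equation = "nat list \<times> nat list"

definition is_equation :: "nat \<Rightarrow> equation \<Rightarrow> bool" where
  "is_equation n E \<longleftrightarrow> set (fst E) \<subseteq> {1..n} \<and> set (snd E) \<subseteq> {1..n}"

(* A morphism h into {a_1,...,a_r}^*: letters a_1..a_r are represented by 0..r-1. *)
definition morph_app :: "(nat \<Rightarrow> nat list) \<Rightarrow> nat list \<Rightarrow> nat list" where
  "morph_app h w = concat (map h w)"

definition is_solution :: "nat \<Rightarrow> (nat \<Rightarrow> nat list) \<Rightarrow> equation \<Rightarrow> bool" where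
  "is_solution r h E \<longleftrightarrow> (\<forall>j. set (h j) \<subseteq> {0..<r}) \<and>
     morph_app h (fst E) = morph_app h (snd E)"

definition count_mat :: "nat \<Rightarrow> nat \<Rightarrow> (nat \<Rightarrow> nat list) \<Rightarrow> rat mat" where
  "count_mat n r h = mat n r (\<lambda>(j, i). of_nat (count_list (h (Suc j)) i))"

definition sol_rank :: "nat \<Rightarrow> nat \<Rightarrow> (nat \<Rightarrow> nat list) \<Rightarrow> nat" where
  "sol_rank n r h = vec_space.rank n (count_mat n r h)"

definition strongly_independent :: "nat \<Rightarrow> equation \<Rightarrow> equation \<Rightarrow> bool" where
  "strongly_independent n E E' \<longleftrightarrow>
     (\<exists>r h. is_solution r h E \<and> sol_rank n r h = n - 1 \<and> \<not> morph_app h (fst E') = morph_app h (snd E')) \<and>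
     (\<exists>r h. is_solution r h E' \<and> sol_rank n r h = n - 1 \<and> \<not> morph_app h (fst E) = morph_app h (snd E))"

(* Z[X_1,...,X_n] as finitely supported maps from monomials (exponent vectors) to int *)
type_synonym mpoly = "(nat \<Rightarrow>\<^sub>0 nat) \<Rightarrow>\<^sub>0 int"

definition Var :: "nat \<Rightarrow> mpoly" where
  "Var i = Poly_Mapping.single (Poly_Mapping.single i 1) 1"

definition Sw :: "nat list \<Rightarrow> nat \<Rightarrow> mpoly" where
  "Sw w j = (\<Sum>a \<in> {a. a < length w \<and> w ! a = j}. prod_list (map Var (take a w)))"

definition S :: "equation \<Rightarrow> nat \<Rightarrow> mpoly" where
  "S E j = Sw (fst E) j - Sw (snd E) j"

definition t_poly :: "equation \<Rightarrow> equation \<Rightarrow> nat \<Rightarrow> nat \<Rightarrow> mpoly" where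
  "t_poly E E' k l = S E k * S E' l - S E' k * S E l"

end

theory Submission imports Defs begin

text \<open>Let h be a rank n-1 solution of E = (u, v) that does not solve E', and specialise each X_j
  to t^|h(x_j)| in Z[t]. Coding a word w by the polynomial F(w) = \<Sum>_a (w_a + 1) t^a, the chain rule
  of the Fox calculus gives \<Sum>_j S_{E,x_j} F(h(x_j)) = F(h(u)) - F(h(v)); this vanishes for E but
  not for E'. Rank n-1 forces h to erase at most one unknown, and then some specialised S_{E,x_k}
  is nonzero: compare constant terms at the first position where u and v differ. If all t_kl
  vanished, the specialised vectors (S_{E,x_j})_j and (S_{E',x_j})_j would be proportional, and
  multiplying the nonzero sum for E' by S_{E,x_k} would give zero in the domain Z[t].\<close>

definition monomial_weight :: "('a \<Rightarrow> nat) \<Rightarrow> ('a \<Rightarrow>\<^sub>0 nat) \<Rightarrow> nat" where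
  "monomial_weight d m = Sum_any (\<lambda>i. Poly_Mapping.lookup m i * d i)"

lemma monomial_weight_add: "monomial_weight d (m + m') = monomial_weight d m + monomial_weight d m'"
proof -
  have fin: "finite {i. Poly_Mapping.lookup p i * d i \<noteq> 0}" for p :: "'a \<Rightarrow>\<^sub>0 nat"
    by (rule finite_subset[OF _ finite_lookup[of p]]) auto
  show ?thesis
    unfolding monomial_weight_def lookup_add distrib_right by (rule Sum_any.distrib[OF fin fin])
qed

lemma monomial_weight_zero [simp]: "monomial_weight d 0 = 0"
  by (simp add: monomial_weight_def)

lemma monomial_weight_single: "monomial_weight d (Poly_Mapping.single i 1) = d i"
proof -
  have eq: "(\<lambda>j. Poly_Mapping.lookup (Poly_Mapping.single i 1) j * d j) = (\<lambda>j. d j when j = i)"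
    by (auto simp: lookup_single when_def)
  show ?thesis unfolding monomial_weight_def eq by (rule Sum_any_when_equal)
qed

text \<open>The substitution \<open>X\<^sub>i \<mapsto> t ^ d i\<close>, with \<open>\<int>[t]\<close> realised as the monoid ring \<open>nat \<Rightarrow>\<^sub>0 int\<close>.\<close>

definition subst_powers :: "('a \<Rightarrow> nat) \<Rightarrow> (('a \<Rightarrow>\<^sub>0 nat) \<Rightarrow>\<^sub>0 int) \<Rightarrow> nat \<Rightarrow>\<^sub>0 int" where
  "subst_powers d p = frag_extend (\<lambda>m. frag_of (monomial_weight d m)) p"

lemma subst_powers_add: "subst_powers d (p + q) = subst_powers d p + subst_powers d q"
  by (simp add: subst_powers_def frag_extend_add)

lemma subst_powers_diff: "subst_powers d (p - q) = subst_powers d p - subst_powers d q"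
  by (simp add: subst_powers_def frag_extend_diff)

lemma subst_powers_zero [simp]: "subst_powers d 0 = 0"
  by (simp add: subst_powers_def)

lemma subst_powers_frag_of [simp]: "subst_powers d (frag_of m) = frag_of (monomial_weight d m)"
  by (simp add: subst_powers_def)

lemma frag_of_mult_frag_of: "frag_of (a :: 'a :: monoid_add) * frag_of b = frag_of (a + b)"
  by (simp add: mult_single)

lemma subst_powers_frag_of_mult:
  "subst_powers d (frag_of m * q) = subst_powers d (frag_of m) * subst_powers d q"
proof (rule frag_induction[of q UNIV])
  fix m' show "subst_powers d (frag_of m * frag_of m') = subst_powers d (frag_of m) * subst_powers d (frag_of m')"
    by (simp only: frag_of_mult_frag_of subst_powers_frag_of monomial_weight_add)
next
  fix a b
  assume "subst_powers d (frag_of m * a) = subst_powers d (frag_of m) * subst_powers d a"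
    and "subst_powers d (frag_of m * b) = subst_powers d (frag_of m) * subst_powers d b"
  then show "subst_powers d (frag_of m * (a - b)) = subst_powers d (frag_of m) * subst_powers d (a - b)"
    by (simp add: right_diff_distrib subst_powers_diff)
qed simp_all

lemma subst_powers_mult: "subst_powers d (p * q) = subst_powers d p * subst_powers d q"
proof (rule frag_induction[of p UNIV])
  fix m show "subst_powers d (frag_of m * q) = subst_powers d (frag_of m) * subst_powers d q"
    by (rule subst_powers_frag_of_mult)
next
  fix a b
  assume "subst_powers d (a * q) = subst_powers d a * subst_powers d q"
    and "subst_powers d (b * q) = subst_powers d b * subst_powers d q"
  then show "subst_powers d ((a - b) * q) = subst_powers d (a - b) * subst_powers d q"
    by (simp add: left_diff_distrib subst_powers_diff)
qed simp_all

lemma subst_powers_one [simp]: "subst_powers d 1 = 1"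
  by (metis subst_powers_frag_of monomial_weight_zero single_one)

lemma subst_powers_Var [simp]: "subst_powers d (Var i) = frag_of (d i)"
  unfolding Var_def subst_powers_frag_of monomial_weight_single ..

lemma Sw_Nil [simp]: "Sw [] j = 0"
  by (simp add: Sw_def)

lemma Sw_Cons: "Sw (c # w) j = (if c = j then 1 else 0) + Var c * Sw w j"
proof -
  let ?pos = "{a. a < length w \<and> w ! a = j}"
  have split: "{a. a < length (c # w) \<and> (c # w) ! a = j} = {a. a = 0 \<and> c = j} \<union> Suc ` ?pos"
  proof (rule Set.set_eqI)
    fix a
    show "a \<in> {a. a < length (c # w) \<and> (c # w) ! a = j} \<longleftrightarrow> a \<in> {a. a = 0 \<and> c = j} \<union> Suc ` ?pos"
      by (cases a) (auto simp: image_iff)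
  qed
  have head: "(\<Sum>a\<in>{a. a = 0 \<and> c = j}. prod_list (map Var (take a (c # w)))) = (if c = j then 1 else 0)"
    by auto
  have tail: "(\<Sum>a\<in>Suc ` ?pos. prod_list (map Var (take a (c # w)))) = Var c * Sw w j"
    unfolding Sw_def by (simp add: sum.reindex sum_distrib_left)
  show ?thesis
    unfolding Sw_def[of "c # w"] split
    by (subst sum.union_disjoint) (use head tail in \<open>auto simp: Sw_def\<close>)
qed

text \<open>The shift by one in the coefficients keeps the letter \<open>0\<close> from being invisible.\<close>

fun word_code :: "nat list \<Rightarrow> nat \<Rightarrow>\<^sub>0 int" where
  "word_code [] = 0"
| "word_code (c # w) = Poly_Mapping.single 0 (int c + 1) + frag_of 1 * word_code w"

lemma word_code_append: "word_code (w @ w') = word_code w + frag_of (length w) * word_code w'"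
proof (induction w)
  case (Cons c w)
  have "frag_of 1 * (frag_of (length w) * word_code w') = frag_of (length (c # w)) * word_code w'"
    by (simp add: mult.assoc[symmetric] frag_of_mult_frag_of)
  then show ?case using Cons by (simp add: distrib_left add.assoc)
qed simp

lemma lookup_frag_of_mult:
  "Poly_Mapping.lookup (frag_of k * (p :: nat \<Rightarrow>\<^sub>0 int)) a
     = (if a < k then 0 else Poly_Mapping.lookup p (a - k))"
proof (rule frag_induction[of p UNIV])
  fix m show "Poly_Mapping.lookup (frag_of k * frag_of m) a = (if a < k then 0 else Poly_Mapping.lookup (frag_of m) (a - k))"
    by (simp add: frag_of_mult_frag_of) linarith
next
  fix c d
  assume "Poly_Mapping.lookup (frag_of k * c) a = (if a < k then 0 else Poly_Mapping.lookup c (a - k))"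
    and "Poly_Mapping.lookup (frag_of k * d) a = (if a < k then 0 else Poly_Mapping.lookup d (a - k))"
  then show "Poly_Mapping.lookup (frag_of k * (c - d)) a = (if a < k then 0 else Poly_Mapping.lookup (c - d) (a - k))"
    by (simp add: right_diff_distrib lookup_minus)
qed simp_all

lemma lookup_word_code:
  "Poly_Mapping.lookup (word_code w) a = (if a < length w then int (w ! a) + 1 else 0)"
proof (induction w arbitrary: a)
  case (Cons c w)
  then show ?case by (cases a) (simp_all add: lookup_add lookup_frag_of_mult lookup_single)
qed simp

lemma inj_word_code: "inj word_code"
proof (rule injI)
  fix w w' assume "word_code w = word_code w'"
  then have coeff: "\<And>a. Poly_Mapping.lookup (word_code w) a = Poly_Mapping.lookup (word_code w') a"
    by simp
  have len: "length w = length w'"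
    using coeff[of "length w"] coeff[of "length w'"] by (auto simp: lookup_word_code split: if_splits)
  show "w = w'"
  proof (rule nth_equalityI[OF len])
    fix i assume "i < length w"
    then show "w ! i = w' ! i" using coeff[of i] len by (simp add: lookup_word_code)
  qed
qed

lemma morph_app_Nil [simp]: "morph_app h [] = []"
  by (simp add: morph_app_def)

lemma morph_app_Cons [simp]: "morph_app h (c # w) = h c @ morph_app h w"
  by (simp add: morph_app_def)

lemma sum_subst_Sw_word_code:
  assumes "finite J" "set w \<subseteq> J"
  shows "(\<Sum>j\<in>J. subst_powers (\<lambda>j. length (h j)) (Sw w j) * word_code (h j))
    = word_code (morph_app h w)"
  using assms(2)
proof (induction w)
  case (Cons c w)
  let ?d = "\<lambda>j. length (h j)"
  have "(\<Sum>j\<in>J. subst_powers ?d (Sw (c # w) j) * word_code (h j))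
      = (\<Sum>j\<in>J. (if c = j then word_code (h j) else 0)
          + frag_of (?d c) * (subst_powers ?d (Sw w j) * word_code (h j)))"
    by (rule sum.cong)
      (auto simp: Sw_Cons subst_powers_add subst_powers_mult distrib_right mult.assoc)
  also have "\<dots> = word_code (h c) + frag_of (?d c) * (\<Sum>j\<in>J. subst_powers ?d (Sw w j) * word_code (h j))"
    using Cons.prems assms(1) by (simp add: sum.distrib sum_distrib_left)
  also have "\<dots> = word_code (morph_app h (c # w))"
    using Cons by (simp add: word_code_append)
  finally show ?case .
qed simp

lemma sum_subst_S_word_code:
  assumes "is_equation n E"
  shows "(\<Sum>j\<in>{1..n}. subst_powers (\<lambda>j. length (h j)) (S E j) * word_code (h j))
    = word_code (morph_app h (fst E)) - word_code (morph_app h (snd E))"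
  using sum_subst_Sw_word_code[of "{1..n}" "fst E" h] sum_subst_Sw_word_code[of "{1..n}" "snd E" h] assms
  by (simp add: is_equation_def S_def subst_powers_diff left_diff_distrib sum_subtractf)

lemma lookup_subst_Sw_Cons_0:
  "Poly_Mapping.lookup (subst_powers d (Sw (c # w) j)) 0
    = (if c = j then 1 else 0) + (if d c = 0 then Poly_Mapping.lookup (subst_powers d (Sw w j)) 0 else 0)"
  by (auto simp: Sw_Cons subst_powers_add subst_powers_mult lookup_add lookup_frag_of_mult)

lemma lookup_subst_Sw_0_nonneg: "0 \<le> Poly_Mapping.lookup (subst_powers d (Sw w j)) 0"
  by (induction w) (simp_all add: lookup_subst_Sw_Cons_0)

lemma lookup_subst_Sw_Cons_self_0: "1 \<le> Poly_Mapping.lookup (subst_powers d (Sw (c # w) c)) 0"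
  using lookup_subst_Sw_0_nonneg[of d w c] by (simp add: lookup_subst_Sw_Cons_0)

lemma lookup_subst_Sw_Cons_other_0:
  "c \<noteq> j \<Longrightarrow> d c \<noteq> 0 \<Longrightarrow> Poly_Mapping.lookup (subst_powers d (Sw (c # w) j)) 0 = 0"
  by (simp add: lookup_subst_Sw_Cons_0)

lemma subst_Sw_diff_neq_0:
  "Poly_Mapping.lookup (subst_powers d (Sw u j)) 0 \<noteq> Poly_Mapping.lookup (subst_powers d (Sw v j)) 0
    \<Longrightarrow> subst_powers d (Sw u j - Sw v j) \<noteq> 0"
  by (auto simp: subst_powers_diff lookup_minus)

lemma subst_Sw_Cons_diff:
  "subst_powers d (Sw (c # u) j - Sw (c # v) j) = frag_of (d c) * subst_powers d (Sw u j - Sw v j)"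
  by (simp add: Sw_Cons subst_powers_diff subst_powers_mult subst_powers_add right_diff_distrib)

lemma ex_subst_Sw_diff_neq_0:
  assumes "u \<noteq> v" "morph_app h u = morph_app h v" "set u \<subseteq> A" "set v \<subseteq> A"
    and erased: "\<forall>k\<in>A. \<forall>k'\<in>A. h k = [] \<longrightarrow> h k' = [] \<longrightarrow> k = k'"
  shows "\<exists>j\<in>A. subst_powers (\<lambda>j. length (h j)) (Sw u j - Sw v j) \<noteq> 0"
  using assms(1-4)
proof (induction u arbitrary: v)
  case Nil
  then obtain c v' where "v = c # v'" "h c = []" "c \<in> A" by (cases v) auto
  then show ?case
    using lookup_subst_Sw_Cons_self_0[of "\<lambda>j. length (h j)" c v'] by (intro bexI[of _ c] subst_Sw_diff_neq_0) auto
next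
  case (Cons c u)
  show ?case
  proof (cases v)
    case Nil
    with Cons.prems have "h c = []" "c \<in> A" by auto
    then show ?thesis
      using Nil lookup_subst_Sw_Cons_self_0[of "\<lambda>j. length (h j)" c u] by (intro bexI[of _ c] subst_Sw_diff_neq_0) auto
  next
    case (Cons c' v')
    note v = this
    have "c \<in> A" "c' \<in> A" using Cons.prems v by auto
    then consider "c = c'" | "c \<noteq> c'" "h c' \<noteq> []" | "c \<noteq> c'" "h c \<noteq> []"
      using erased by blast
    then show ?thesis
    proof cases
      case 1
      then obtain j where "j \<in> A" "subst_powers (\<lambda>j. length (h j)) (Sw u j - Sw v' j) \<noteq> 0"
        using Cons.IH[of v'] Cons.prems v by auto
      then show ?thesis using 1 v by (auto simp: subst_Sw_Cons_diff)
    next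
      case 2
      then show ?thesis
        using \<open>c \<in> A\<close> v lookup_subst_Sw_Cons_self_0[of "\<lambda>j. length (h j)" c u]
          lookup_subst_Sw_Cons_other_0[of c' c "\<lambda>j. length (h j)" v']
        by (intro bexI[of _ c] subst_Sw_diff_neq_0) auto
    next
      case 3
      then show ?thesis
        using \<open>c' \<in> A\<close> v lookup_subst_Sw_Cons_self_0[of "\<lambda>j. length (h j)" c' v']
          lookup_subst_Sw_Cons_other_0[of c c' "\<lambda>j. length (h j)" u]
        by (intro bexI[of _ c'] subst_Sw_diff_neq_0) auto
    qed
  qed
qed

lemma (in vec_space) span_vanishing_coordinate:
  assumes "W \<subseteq> carrier_vec n" "k < n" "\<forall>x\<in>W. x $ k = 0" "v \<in> span W"
  shows "v $ k = 0"
proof -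
  obtain a A where A: "A \<subseteq> W" "finite A" "v = lincomb a A"
    using in_spanE[OF assms(4)] by blast
  have "v $ k = (\<Sum>x\<in>A. a x * x $ k)"
    using lincomb_index[OF assms(2)] A assms(1) by blast
  also have "\<dots> = 0" by (rule sum.neutral) (use A(1) assms(3) in auto)
  finally show ?thesis .
qed

lemma (in vec_space) lin_indpt_Un_unit_vecs:
  assumes W: "W \<subseteq> carrier_vec n" "finite W" "lin_indpt W"
    and K: "K \<subseteq> {..<n}" and vanish: "\<forall>x\<in>W. \<forall>k\<in>K. x $ k = 0"
  shows "lin_indpt (W \<union> unit_vec n ` K) \<and> card (W \<union> unit_vec n ` K) = card W + card K"
proof -
  have "finite K" using K finite_subset by blast
  then show ?thesis using K vanish
  proof (induction K)
    case (insert k K)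
    let ?T = "W \<union> unit_vec n ` K"
    have T: "?T \<subseteq> carrier_vec n" using W insert.prems by auto
    have k: "k < n" using insert.prems by auto
    have T_vanish: "\<forall>x\<in>?T. x $ k = 0" using insert k by auto
    have e: "unit_vec n k $ k = 1" using k by simp
    have new: "unit_vec n k \<notin> ?T" using T_vanish e by (metis zero_neq_one)
    have IH: "lin_indpt ?T" "card ?T = card W + card K" using insert by auto
    have "unit_vec n k \<notin> span ?T" using span_vanishing_coordinate[OF T k T_vanish] e by (metis zero_neq_one)
    then have "lin_indpt (?T \<union> {unit_vec n k})" using lin_dep_iff_in_span[OF T IH(1) _ new] by simp
    moreover have "card (insert (unit_vec n k) ?T) = card W + card (insert k K)"
      using IH(2) new insert.hyps W(2) by simp
    ultimately show ?case by (simp add: insert_commute)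
  qed (use W in simp)
qed

lemma (in vec_space) rank_plus_card_zero_rows_le:
  assumes A: "A \<in> carrier_mat n nc" and K: "K \<subseteq> {..<n}"
    and zero: "\<And>k c. k \<in> K \<Longrightarrow> c < nc \<Longrightarrow> A $$ (k, c) = 0"
  shows "rank A + card K \<le> n"
proof -
  obtain W where max: "maximal W (\<lambda>U. U \<subseteq> set (cols A) \<and> lin_indpt U)"
    using maximal_exists[of "\<lambda>U. U \<subseteq> set (cols A) \<and> lin_indpt U" "card (set (cols A))" "{}"]
    by (meson List.finite_set card_mono empty_iff empty_subsetI finite_lin_indpt2 rev_finite_subset)
  have W: "W \<subseteq> set (cols A)" "lin_indpt W" using max unfolding maximal_def by auto
  have carr: "W \<subseteq> carrier_vec n" using W(1) cols_dim A by blast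
  have vanish: "\<forall>x\<in>W. \<forall>k\<in>K. x $ k = 0"
  proof (intro ballI)
    fix x k assume "x \<in> W" "k \<in> K"
    then obtain c where "c < length (cols A)" "x = cols A ! c"
      using W(1) by (metis in_set_conv_nth subsetD)
    then have "c < nc" "x = col A c" using A by auto
    then show "x $ k = 0" using zero[OF \<open>k \<in> K\<close>] K \<open>k \<in> K\<close> A by auto
  qed
  have li: "lin_indpt (W \<union> unit_vec n ` K)"
    and card: "card (W \<union> unit_vec n ` K) = rank A + card K"
    using lin_indpt_Un_unit_vecs[OF carr _ W(2) K vanish] rank_card_indpt[OF A max]
      finite_subset[OF W(1)] by auto
  have "W \<union> unit_vec n ` K \<subseteq> carrier_vec n" using carr K by auto
  from li_le_dim(2)[OF fin_dim this li] show ?thesis using card dim_is_n by simp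
qed

lemma sol_rank_plus_card_erased_le: "sol_rank n r h + card {k \<in> {1..n}. h k = []} \<le> n"
proof -
  let ?K = "(\<lambda>k. k - 1) ` {k \<in> {1..n}. h k = []}"
  have "card ?K = card {k \<in> {1..n}. h k = []}"
    by (rule card_image) (auto simp: inj_on_def)
  moreover have "vec_space.rank n (count_mat n r h) + card ?K \<le> n"
    by (rule vec_space.rank_plus_card_zero_rows_le[of _ _ r]) (auto simp: count_mat_def)
  ultimately show ?thesis by (simp add: sol_rank_def)
qed

lemma erased_unique_if_sol_rank:
  assumes "sol_rank n r h = n - 1" "k \<in> {1..n}" "k' \<in> {1..n}" "h k = []" "h k' = []"
  shows "k = k'"
proof -
  have "card {k \<in> {1..n}. h k = []} \<le> 1" using sol_rank_plus_card_erased_le[of n r h] assms(1) by simp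
  then show ?thesis using assms(2-) by (auto simp: card_le_Suc0_iff_eq)
qed

lemma ex_subst_S_neq_0:
  assumes "is_equation n E" "fst E \<noteq> snd E" "is_solution r h E" "sol_rank n r h = n - 1"
  shows "\<exists>k\<in>{1..n}. subst_powers (\<lambda>j. length (h j)) (S E k) \<noteq> 0"
  unfolding S_def using assms erased_unique_if_sol_rank[OF assms(4)]
  by (intro ex_subst_Sw_diff_neq_0) (auto simp: is_solution_def is_equation_def)

lemma mult_sum_cross_eq:
  fixes a b y :: "'a \<Rightarrow> 'b :: comm_semiring_0"
  assumes "\<forall>l\<in>A. a k * b l = b k * a l"
  shows "a k * (\<Sum>l\<in>A. b l * y l) = b k * (\<Sum>l\<in>A. a l * y l)"
proof -
  have "a k * (\<Sum>l\<in>A. b l * y l) = (\<Sum>l\<in>A. (a k * b l) * y l)"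
    by (simp add: sum_distrib_left mult.assoc)
  also have "\<dots> = (\<Sum>l\<in>A. (b k * a l) * y l)" using assms by simp
  also have "\<dots> = b k * (\<Sum>l\<in>A. a l * y l)" by (simp add: sum_distrib_left mult.assoc)
  finally show ?thesis .
qed

theorem lemma4p3:
  fixes n :: nat and E E' :: equation
  assumes "is_equation n E" and "is_equation n E'"
    and "strongly_independent n E E'"
  shows "\<exists>k \<in> {1..n}. \<exists>l \<in> {1..n}. t_poly E E' k l \<noteq> 0"
proof (rule ccontr)
  assume "\<not> ?thesis"
  then have t_zero: "\<forall>k\<in>{1..n}. \<forall>l\<in>{1..n}. t_poly E E' k l = 0" by blast
  obtain r h where sol: "is_solution r h E" and rank: "sol_rank n r h = n - 1"
    and not_sol': "morph_app h (fst E') \<noteq> morph_app h (snd E')"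
    using assms(3) unfolding strongly_independent_def by blast
  have "fst E \<noteq> snd E" using assms(3) unfolding strongly_independent_def by metis
  let ?d = "\<lambda>j. length (h j)"
  define a where "a j = subst_powers ?d (S E j)" for j
  define b where "b j = subst_powers ?d (S E' j)" for j
  obtain k where k: "k \<in> {1..n}" "a k \<noteq> 0"
    using ex_subst_S_neq_0[OF assms(1) \<open>fst E \<noteq> snd E\<close> sol rank] unfolding a_def by blast
  have "(\<Sum>j\<in>{1..n}. a j * word_code (h j)) = 0"
    using sum_subst_S_word_code[OF assms(1), of h] sol by (simp add: a_def is_solution_def)
  moreover have "(\<Sum>j\<in>{1..n}. b j * word_code (h j)) \<noteq> 0"
    using sum_subst_S_word_code[OF assms(2), of h] not_sol' inj_word_code
    by (auto simp: b_def dest: injD)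
  moreover have "\<forall>l\<in>{1..n}. a k * b l = b k * a l"
  proof
    fix l assume "l \<in> {1..n}"
    then have "subst_powers ?d (t_poly E E' k l) = 0" using t_zero k(1) by simp
    then show "a k * b l = b k * a l"
      by (simp add: t_poly_def a_def b_def subst_powers_diff subst_powers_mult)
  qed
  ultimately show False
    using mult_sum_cross_eq[of "{1..n}" a k b "\<lambda>j. word_code (h j)"] k(2) by simp
qed

end
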